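(* Let $k\ge 2$, let $G$ be a $K_k$-free graph on $n$ vertices containing an independent set $A$ of size $a$, and let $H$ be a complete multipartite graph. Then there is a complete $(k-1)$-partite graph $G'$ on $n$ vertices such that $\mathcal{N}(H,G)\le \mathcal{N}(H,G')$ and one of the parts of $G'$ has size at least $a$.
   Context: For graphs $H,G$, $\mathcal{N}(H,G)$ denotes the number of subgraphs of $G$ isomorphic to $H$. *)

theory Defs
  imports Main
begin

definition sgraph :: "'a set \<Rightarrow> 'a set set \<Rightarrow> bool" where
  "sgraph V E \<longleftrightarrow> finite V \<and> (\<forall>e\<in>E. e \<subseteq> V \<and> card e = 2)"

text \<open>Edge set of the complete multipartite graph on V whose parts are the fibres of p.\<close>
definition cmp_edges :: "'a set \<Rightarrow> ('a \<Rightarrow> nat) \<Rightarrow> 'a set set" where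
  "cmp_edges V p = {{u, v} | u v. u \<in> V \<and> v \<in> V \<and> p u \<noteq> p v}"

definition complete_multipartite :: "'a set \<Rightarrow> 'a set set \<Rightarrow> bool" where
  "complete_multipartite V E \<longleftrightarrow> (\<exists>p. E = cmp_edges V p)"

definition graph_iso :: "'b set \<Rightarrow> 'b set set \<Rightarrow> 'a set \<Rightarrow> 'a set set \<Rightarrow> bool" where
  "graph_iso V1 E1 V2 E2 \<longleftrightarrow>
     (\<exists>f. bij_betw f V1 V2 \<and> (\<forall>e. e \<subseteq> V1 \<longrightarrow> (e \<in> E1 \<longleftrightarrow> f ` e \<in> E2)))"

definition num_copies :: "'b set \<Rightarrow> 'b set set \<Rightarrow> 'a set \<Rightarrow> 'a set set \<Rightarrow> nat" where
  "num_copies VH EH V E = card {(V', E'). V' \<subseteq> V \<and> E' \<subseteq> E \<and> (\<forall>e\<in>E'. e \<subseteq> V')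
                                      \<and> graph_iso VH EH V' E'}"

definition clique_free :: "nat \<Rightarrow> 'a set \<Rightarrow> 'a set set \<Rightarrow> bool" where
  "clique_free k V E \<longleftrightarrow>
     \<not> (\<exists>S \<subseteq> V. card S = k \<and> (\<forall>u\<in>S. \<forall>v\<in>S. u \<noteq> v \<longrightarrow> {u, v} \<in> E))"

definition independent_set :: "'a set \<Rightarrow> 'a set \<Rightarrow> 'a set set \<Rightarrow> bool" where
  "independent_set A V E \<longleftrightarrow> A \<subseteq> V \<and> (\<forall>u\<in>A. \<forall>v\<in>A. {u, v} \<notin> E)"

end

theory Submission
  imports Defs "HOL-Combinatorics.Transposition" "HOL-Library.Product_Lexorder"
begin

text \<open>Zykov symmetrization. Among the \<open>K\<^sub>k\<close>-free graphs on \<open>V\<close> in which \<open>A\<close> is independent,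
  take one, \<open>F\<close>, that maximises \<open>N(H, F)\<close> and, subject to that, the number of ordered pairs of
  twins (non-adjacent vertices with the same neighbourhood). Suppose \<open>F\<close> had two non-adjacent
  vertices \<open>u\<close>, \<open>v\<close> that are not twins; they can be chosen so that replacing either of them by a
  twin of the other keeps \<open>A\<close> independent. Both resulting graphs are still \<open>K\<^sub>k\<close>-free, and
  because \<open>H\<close> is complete multipartite their numbers of copies of \<open>H\<close> add up to at least
  \<open>2 N(H, F)\<close>, so both are maximal; but replacing the vertex with the smaller twin class strictly
  increases the number of twin pairs. Hence non-adjacency is transitive in \<open>F\<close>: \<open>F\<close> is complete
  multipartite, with at most \<open>k - 1\<close> parts since it is \<open>K\<^sub>k\<close>-free, and \<open>A\<close> lies in one part.\<close>

lemma sgraph_edgeE: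
  assumes "sgraph V E" "e \<in> E"
  obtains x y where "e = {x, y}" "x \<noteq> y" "x \<in> V" "y \<in> V"
  using assms unfolding sgraph_def by (metis card_2_iff insert_subset)

lemma sgraph_singleton_notin: "sgraph V E \<Longrightarrow> {x} \<notin> E"
  unfolding sgraph_def by fastforce

lemma finite_sgraph_edges: "sgraph V E \<Longrightarrow> finite E"
  unfolding sgraph_def by (meson Pow_iff finite_Pow_iff finite_subset subsetI)

lemma doubleton_in_cmp_edges_iff: "{x, y} \<in> cmp_edges V p \<longleftrightarrow> x \<in> V \<and> y \<in> V \<and> p x \<noteq> p y"
  unfolding cmp_edges_def by (auto simp: doubleton_eq_iff)

lemma cmp_edgesI:
  assumes "sgraph V E" and "\<And>x y. x \<in> V \<Longrightarrow> y \<in> V \<Longrightarrow> {x, y} \<in> E \<longleftrightarrow> p x \<noteq> p y"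
  shows "E = cmp_edges V p"
proof
  show "E \<subseteq> cmp_edges V p"
    using assms by (auto elim: sgraph_edgeE simp: doubleton_in_cmp_edges_iff)
  show "cmp_edges V p \<subseteq> E"
    using assms(2) unfolding cmp_edges_def by blast
qed

lemma graph_iso_trans:
  assumes "graph_iso V1 E1 V2 E2" "graph_iso V2 E2 V3 E3"
  shows "graph_iso V1 E1 V3 E3"
proof -
  obtain f where f: "bij_betw f V1 V2" "\<And>e. e \<subseteq> V1 \<Longrightarrow> e \<in> E1 \<longleftrightarrow> f ` e \<in> E2"
    using assms(1) unfolding graph_iso_def by blast
  obtain g where g: "bij_betw g V2 V3" "\<And>e. e \<subseteq> V2 \<Longrightarrow> e \<in> E2 \<longleftrightarrow> g ` e \<in> E3"
    using assms(2) unfolding graph_iso_def by blast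
  have "e \<in> E1 \<longleftrightarrow> (g \<circ> f) ` e \<in> E3" if "e \<subseteq> V1" for e
    using f g that by (metis bij_betw_imp_surj_on image_comp image_mono)
  with bij_betw_trans[OF f(1) g(1)] show ?thesis
    unfolding graph_iso_def by blast
qed

lemma graph_iso_image:
  assumes "inj_on f V" "E \<subseteq> Pow V"
  shows "graph_iso V E (f ` V) (image f ` E)"
proof -
  have "e \<in> E \<longleftrightarrow> f ` e \<in> image f ` E" if "e \<subseteq> V" for e
    using inj_on_image_mem_iff[OF inj_on_image_Pow[OF assms(1)]] assms(2) that by blast
  with assms(1) show ?thesis
    unfolding graph_iso_def by (metis inj_on_imp_bij_betw)
qed

lemma graph_iso_complete_multipartiteE:
  fixes VH :: "'b set" and V' :: "'a set"
  assumes "complete_multipartite VH EH" "graph_iso VH EH V' F"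
  obtains q :: "'a \<Rightarrow> nat" where "\<And>x y. x \<in> V' \<Longrightarrow> y \<in> V' \<Longrightarrow> {x, y} \<in> F \<longleftrightarrow> q x \<noteq> q y"
proof -
  obtain p where p: "EH = cmp_edges VH p"
    using assms(1) unfolding complete_multipartite_def by blast
  obtain f where f: "bij_betw f VH V'" "\<And>e. e \<subseteq> VH \<Longrightarrow> e \<in> EH \<longleftrightarrow> f ` e \<in> F"
    using assms(2) unfolding graph_iso_def by blast
  define g where "g = inv_into VH f"
  have g: "g x \<in> VH" "f (g x) = x" if "x \<in> V'" for x
    using f(1) that unfolding g_def
    by (metis bij_betw_imp_surj_on inv_into_into, metis bij_betw_imp_surj_on f_inv_into_f)
  have "{x, y} \<in> F \<longleftrightarrow> p (g x) \<noteq> p (g y)" if "x \<in> V'" "y \<in> V'" for x y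
    using f(2)[of "{g x, g y}"] g[OF that(1)] g[OF that(2)]
    by (simp add: p doubleton_in_cmp_edges_iff)
  then show ?thesis
    using that[of "p \<circ> g"] by simp
qed

subsection \<open>Cloning a vertex\<close>

(* The symmetrization step: u is turned into a twin of v. *)
definition clone :: "'a set set \<Rightarrow> 'a \<Rightarrow> 'a \<Rightarrow> 'a set set" where
  "clone E u v = {e \<in> E. u \<notin> e} \<union> {{u, w} | w. {v, w} \<in> E}"

lemma clone_edge_avoiding: "u \<notin> e \<Longrightarrow> e \<in> clone E u v \<longleftrightarrow> e \<in> E"
  unfolding clone_def by auto

lemma clone_edge_at: "u \<noteq> w \<Longrightarrow> {u, w} \<in> clone E u v \<longleftrightarrow> {v, w} \<in> E"
  unfolding clone_def by (auto simp: doubleton_eq_iff)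

lemma clone_edge_redirect:
  assumes "{u, v} \<notin> E" "e \<in> clone E u v"
  shows "id(u := v) ` e \<in> E"
proof -
  consider "e \<in> E" "u \<notin> e" | w where "e = {u, w}" "{v, w} \<in> E"
    using assms(2) unfolding clone_def by blast
  then show ?thesis
  proof cases
    case 1
    then have "id(u := v) ` e = e"
      by (auto simp: image_iff)
    with 1 show ?thesis by simp
  next
    case 2
    then have "w \<noteq> u"
      using assms(1) by (auto simp: insert_commute)
    with 2 show ?thesis by (simp add: insert_commute)
  qed
qed

lemma sgraph_clone:
  assumes "sgraph V E" "u \<in> V" "{u, v} \<notin> E"
  shows "sgraph V (clone E u v)"
proof -
  have "e \<subseteq> V \<and> card e = 2" if "e \<in> clone E u v" for e
  proof -
    from that consider "e \<in> E" | w where "e = {u, w}" "{v, w} \<in> E"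
      unfolding clone_def by auto
    then show ?thesis
    proof cases
      case 2
      then have "w \<noteq> u" "w \<in> V"
        using assms by (auto simp: insert_commute doubleton_eq_iff elim!: sgraph_edgeE)
      with 2 assms(2) show ?thesis by simp
    qed (use assms(1) in \<open>auto simp: sgraph_def\<close>)
  qed
  with assms(1) show ?thesis
    unfolding sgraph_def by blast
qed

lemma clique_free_clone:
  assumes "sgraph V E" "clique_free k V E" "v \<in> V" "u \<noteq> v" "{u, v} \<notin> E"
  shows "clique_free k V (clone E u v)"
  unfolding clique_free_def
proof
  assume "\<exists>S\<subseteq>V. card S = k \<and> (\<forall>x\<in>S. \<forall>y\<in>S. x \<noteq> y \<longrightarrow> {x, y} \<in> clone E u v)"
  then obtain S where S: "S \<subseteq> V" "card S = k"
    and clique: "\<And>x y. x \<in> S \<Longrightarrow> y \<in> S \<Longrightarrow> x \<noteq> y \<Longrightarrow> {x, y} \<in> clone E u v"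
    by blast
  let ?g = "id(u := v)"
  have "{u, v} \<notin> clone E u v"
    using assms(1,4) by (simp add: clone_edge_at sgraph_singleton_notin)
  then have "u \<notin> S \<or> v \<notin> S"
    using clique assms(4) by blast
  then have inj: "inj_on ?g S"
    by (auto simp: inj_on_def)
  have "?g ` S \<subseteq> V" "card (?g ` S) = k"
    using S assms(3) card_image[OF inj] by auto
  moreover have "{x', y'} \<in> E"
    if images: "x' \<in> ?g ` S" "y' \<in> ?g ` S" and "x' \<noteq> y'" for x' y'
  proof -
    obtain x y where "x \<in> S" "y \<in> S" "x' = ?g x" "y' = ?g y"
      using images by blast
    with \<open>x' \<noteq> y'\<close> clique have "?g ` {x, y} \<in> E"
      using clone_edge_redirect[OF assms(5)] by blast
    with \<open>x' = ?g x\<close> \<open>y' = ?g y\<close> show ?thesis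
      by (simp only: image_insert image_empty)
  qed
  ultimately show False
    using assms(2) unfolding clique_free_def by blast
qed

lemma independent_set_clone:
  assumes "independent_set A V E" "u \<in> A \<Longrightarrow> \<forall>w\<in>A. {v, w} \<notin> E"
  shows "independent_set A V (clone E u v)"
  unfolding independent_set_def
proof (intro conjI ballI notI)
  show "A \<subseteq> V"
    using assms(1) unfolding independent_set_def by simp
  fix x y assume "x \<in> A" "y \<in> A" "{x, y} \<in> clone E u v"
  then show False
    using assms unfolding independent_set_def clone_def
    by (auto simp: doubleton_eq_iff insert_commute)
qed

subsection \<open>Twins\<close>

definition twins :: "'a set set \<Rightarrow> 'a \<Rightarrow> 'a \<Rightarrow> bool" where
  "twins E x y \<longleftrightarrow> {x, y} \<notin> E \<and> (\<forall>w. {x, w} \<in> E \<longleftrightarrow> {y, w} \<in> E)"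

definition twin_pairs :: "'a set \<Rightarrow> 'a set set \<Rightarrow> ('a \<times> 'a) set" where
  "twin_pairs V E = {(x, y). x \<in> V \<and> y \<in> V \<and> twins E x y}"

lemma twins_refl: "sgraph V E \<Longrightarrow> twins E x x"
  unfolding twins_def by (simp add: sgraph_singleton_notin)

lemma twins_commute: "twins E x y \<longleftrightarrow> twins E y x"
  unfolding twins_def by (auto simp: insert_commute)

lemma twins_clone_avoiding:
  assumes "x \<noteq> u" "y \<noteq> u" "twins E x y"
  shows "twins (clone E u v) x y"
  unfolding twins_def
proof (intro conjI allI)
  have "u \<notin> {x, y}"
    using assms(1,2) by simp
  moreover have "{x, y} \<notin> E"
    using assms(3) unfolding twins_def by blast
  ultimately show "{x, y} \<notin> clone E u v"
    by (simp add: clone_edge_avoiding)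
  fix w
  have twin_nbrs: "{x, w'} \<in> E \<longleftrightarrow> {y, w'} \<in> E" for w'
    using assms(3) unfolding twins_def by blast
  show "{x, w} \<in> clone E u v \<longleftrightarrow> {y, w} \<in> clone E u v"
  proof (cases "w = u")
    case True
    have "{x, u} \<in> clone E u v \<longleftrightarrow> {x, v} \<in> E" "{y, u} \<in> clone E u v \<longleftrightarrow> {y, v} \<in> E"
      using clone_edge_at[of u x E v] clone_edge_at[of u y E v] assms(1,2)
      by (simp_all add: insert_commute)
    with True twin_nbrs show ?thesis
      by simp
  next
    case False
    then have "u \<notin> {x, w}" "u \<notin> {y, w}"
      using assms(1,2) by auto
    with twin_nbrs show ?thesis
      by (simp add: clone_edge_avoiding)
  qed
qed

lemma twins_clone_at:
  assumes "y \<noteq> u" "{u, v} \<notin> E" "twins E v y"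
  shows "twins (clone E u v) u y"
  unfolding twins_def
proof (intro conjI allI)
  have twin_nbrs: "{v, w'} \<in> E \<longleftrightarrow> {y, w'} \<in> E" for w'
    using assms(3) unfolding twins_def by blast
  show uy: "{u, y} \<notin> clone E u v"
    using assms(1,3) clone_edge_at unfolding twins_def by metis
  fix w
  show "{u, w} \<in> clone E u v \<longleftrightarrow> {y, w} \<in> clone E u v"
  proof (cases "w = u")
    case True
    have "{u} \<notin> clone E u v"
      using assms(2) unfolding clone_def by (auto simp: doubleton_eq_iff insert_commute)
    moreover have "{y, u} \<notin> clone E u v"
      using uy by (simp add: insert_commute)
    ultimately show ?thesis
      using True by simp
  next
    case False
    then have "u \<notin> {y, w}"
      using assms(1) by auto
    with False twin_nbrs show ?thesis
      by (simp add: clone_edge_avoiding clone_edge_at)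
  qed
qed

lemma card_twin_pairs_through_le:
  assumes "finite V"
  shows "card (twin_pairs V E \<inter> {p. fst p = u \<or> snd p = u}) \<le> 2 * card (twin_pairs V E `` {u})"
proof -
  let ?T = "twin_pairs V E"
  let ?C = "?T `` {u}"
  have "finite ?C"
    using assms unfolding twin_pairs_def by (simp add: finite_subset[of _ V])
  have "?T \<inter> {p. fst p = u \<or> snd p = u} \<subseteq> {u} \<times> ?C \<union> ?C \<times> {u}"
  proof
    fix p assume "p \<in> ?T \<inter> {p. fst p = u \<or> snd p = u}"
    then obtain x y where p: "p = (x, y)" "(x, y) \<in> ?T" "x = u \<or> y = u"
      by (cases p) auto
    then have "(y, x) \<in> ?T"
      unfolding twin_pairs_def by (simp add: twins_commute)
    with p show "p \<in> {u} \<times> ?C \<union> ?C \<times> {u}"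
      by auto
  qed
  then have "card (?T \<inter> {p. fst p = u \<or> snd p = u}) \<le> card ({u} \<times> ?C \<union> ?C \<times> {u})"
    using \<open>finite ?C\<close> by (simp add: card_mono)
  also have "\<dots> \<le> card ({u} \<times> ?C) + card (?C \<times> {u})"
    by (rule card_Un_le)
  finally show ?thesis
    by (simp add: card_cartesian_product)
qed

lemma card_twin_pairs_clone_through_ge:
  assumes "sgraph V E" "u \<in> V" "{u, v} \<notin> E" "\<not> twins E u v"
  shows "2 * card (twin_pairs V E `` {v}) + 1
    \<le> card (twin_pairs V (clone E u v) \<inter> {p. fst p = u \<or> snd p = u})"
proof -
  let ?T' = "twin_pairs V (clone E u v)"
  let ?C = "twin_pairs V E `` {v}"
  have "finite V"
    using assms(1) unfolding sgraph_def by simp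
  then have "finite ?C" "finite ?T'"
    unfolding twin_pairs_def by (auto intro: finite_subset[of _ V] finite_subset[of _ "V \<times> V"])
  have "u \<notin> ?C"
    using assms(4) unfolding twin_pairs_def by (simp add: twins_commute)
  then have card_new: "card (insert (u, u) ({u} \<times> ?C \<union> ?C \<times> {u})) = 2 * card ?C + 1"
    using \<open>finite ?C\<close> by (simp add: card_Un_disjoint card_cartesian_product disjoint_iff)
  have "(u, y) \<in> ?T' \<and> (y, u) \<in> ?T'" if "y \<in> ?C" for y
  proof -
    have "y \<in> V" "twins E v y" "y \<noteq> u"
      using that \<open>u \<notin> ?C\<close> unfolding twin_pairs_def by auto
    then have "twins (clone E u v) u y"
      using twins_clone_at[OF _ assms(3)] by blast
    with \<open>y \<in> V\<close> show ?thesis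
      using assms(2) unfolding twin_pairs_def by (simp add: twins_commute)
  qed
  moreover have "(u, u) \<in> ?T'"
    using assms(2) twins_refl[OF sgraph_clone[OF assms(1,2,3)]] unfolding twin_pairs_def by simp
  ultimately have "insert (u, u) ({u} \<times> ?C \<union> ?C \<times> {u}) \<subseteq> ?T' \<inter> {p. fst p = u \<or> snd p = u}"
    by auto
  then have "card (insert (u, u) ({u} \<times> ?C \<union> ?C \<times> {u}))
      \<le> card (?T' \<inter> {p. fst p = u \<or> snd p = u})"
    using \<open>finite ?T'\<close> by (intro card_mono) auto
  with card_new show ?thesis
    by simp
qed

lemma card_twin_pairs_clone:
  assumes "sgraph V E" "u \<in> V" "{u, v} \<notin> E" "\<not> twins E u v"
    and "card (twin_pairs V E `` {u}) \<le> card (twin_pairs V E `` {v})"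
  shows "card (twin_pairs V E) < card (twin_pairs V (clone E u v))"
proof -
  let ?T = "twin_pairs V E" and ?T' = "twin_pairs V (clone E u v)"
  let ?I = "{p. fst p = u \<or> snd p = u}"
  have "finite V"
    using assms(1) unfolding sgraph_def by simp
  then have fin: "finite ?T" "finite ?T'"
    unfolding twin_pairs_def by (auto intro: finite_subset[of _ "V \<times> V"])
  have "?T - ?I \<subseteq> ?T' - ?I"
    unfolding twin_pairs_def by (auto intro: twins_clone_avoiding)
  then have "card (?T - ?I) \<le> card (?T' - ?I)"
    using fin(2) by (simp add: card_mono)
  with card_twin_pairs_through_le[OF \<open>finite V\<close>, of E u] card_twin_pairs_clone_through_ge[OF assms(1-4)]
  show ?thesis
    using assms(5) card_Int_Diff[OF fin(1), of ?I] card_Int_Diff[OF fin(2), of ?I] by linarith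
qed

subsection \<open>Counting copies\<close>

definition copies :: "'b set \<Rightarrow> 'b set set \<Rightarrow> 'a set \<Rightarrow> 'a set set \<Rightarrow> ('a set \<times> 'a set set) set" where
  "copies VH EH V E =
     {(V', E'). V' \<subseteq> V \<and> E' \<subseteq> E \<and> (\<forall>e\<in>E'. e \<subseteq> V') \<and> graph_iso VH EH V' E'}"

lemma num_copies_eq_card: "num_copies VH EH V E = card (copies VH EH V E)"
  unfolding num_copies_def copies_def ..

lemma finite_copies:
  assumes "sgraph V E"
  shows "finite (copies VH EH V E)"
proof (rule finite_subset)
  show "copies VH EH V E \<subseteq> Pow V \<times> Pow E"
    unfolding copies_def by auto
  show "finite (Pow V \<times> Pow E)"
    using assms finite_sgraph_edges[OF assms] unfolding sgraph_def by simp
qed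

lemma copies_clone:
  fixes V :: "'a set" and VH :: "'b set"
  assumes "complete_multipartite VH EH" "sgraph V E" "{u, v} \<notin> E"
    and "(V', F) \<in> copies VH EH V E" "u \<in> V' \<Longrightarrow> v \<in> V'"
  shows "(V', F) \<in> copies VH EH V (clone E u v)"
proof -
  have copy: "F \<subseteq> E" "\<forall>e\<in>F. e \<subseteq> V'" "graph_iso VH EH V' F"
    using assms(4) unfolding copies_def by auto
  obtain q :: "'a \<Rightarrow> nat" where q: "\<And>x y. x \<in> V' \<Longrightarrow> y \<in> V' \<Longrightarrow> {x, y} \<in> F \<longleftrightarrow> q x \<noteq> q y"
    using graph_iso_complete_multipartiteE[OF assms(1) copy(3)] by blast
  have "e \<in> clone E u v" if "e \<in> F" for e
  proof (cases "u \<in> e")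
    case False
    with that copy(1) show ?thesis
      by (auto simp: clone_edge_avoiding)
  next
    case True
    have "e \<in> E"
      using that copy(1) by blast
    then obtain x y where "e = {x, y}" "x \<noteq> y" "x \<in> V" "y \<in> V"
      by (rule sgraph_edgeE[OF assms(2)])
    with True have "e = {u, if x = u then y else x}"
      by auto
    then obtain w where e: "e = {u, w}"
      by blast
    have "u \<in> V'" "w \<in> V'" "v \<in> V'"
      using that copy(2) e assms(5) by auto
    have "{u, v} \<notin> F"
      using assms(3) copy(1) by blast
    \<comment> \<open>so u and v lie in the same part of the copy and have the same neighbours in it\<close>
    with q[of u v] q[of u w] q[of v w] have "{v, w} \<in> F"
      using that e \<open>u \<in> V'\<close> \<open>w \<in> V'\<close> \<open>v \<in> V'\<close> by simp
    moreover have "w \<noteq> u"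
      using that e \<open>u \<in> V'\<close> q[of u u] by auto
    ultimately show ?thesis
      using e copy(1) by (auto simp: clone_edge_at)
  qed
  with assms(4) show ?thesis
    unfolding copies_def by auto
qed

lemma copies_clone_transpose:
  assumes "sgraph V E" "u \<in> V" "v \<in> V"
    and "(V', F) \<in> copies VH EH V E" "u \<notin> V'" "v \<in> V'"
  shows "(transpose u v ` V', image (transpose u v) ` F) \<in> copies VH EH V (clone E u v)"
proof -
  let ?s = "transpose u v"
  have copy: "V' \<subseteq> V" "F \<subseteq> E" "F \<subseteq> Pow V'" "graph_iso VH EH V' F"
    using assms(4) unfolding copies_def by auto
  have "?s ` V' \<subseteq> V"
    using copy(1) assms(2,3) by (auto simp: transpose_def)
  moreover have "?s ` e \<in> clone E u v" if "e \<in> F" for e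
  proof -
    have "e \<in> E" "u \<notin> e"
      using that copy(2,3) assms(5) by auto
    obtain x y where "e = {x, y}" "x \<noteq> y" "x \<in> V" "y \<in> V"
      using \<open>e \<in> E\<close> by (rule sgraph_edgeE[OF assms(1)])
    show ?thesis
    proof (cases "v \<in> e")
      case True
      define w where "w = (if x = v then y else x)"
      have "e = {v, w}" "w \<noteq> v" "w \<noteq> u"
        using True \<open>e = {x, y}\<close> \<open>x \<noteq> y\<close> \<open>u \<notin> e\<close> unfolding w_def by auto
      with \<open>e \<in> E\<close> show ?thesis
        by (simp add: clone_edge_at)
    next
      case False
      then have "?s ` e = e"
        using \<open>u \<notin> e\<close> by simp
      with \<open>e \<in> E\<close> \<open>u \<notin> e\<close> show ?thesis
        by (simp add: clone_edge_avoiding)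
    qed
  qed
  moreover have "graph_iso VH EH (?s ` V') (image ?s ` F)"
    using graph_iso_trans[OF copy(4) graph_iso_image[OF inj_on_transpose copy(3)]] .
  moreover have "\<forall>e\<in>image ?s ` F. e \<subseteq> ?s ` V'"
    using copy(3) by blast
  ultimately show ?thesis
    unfolding copies_def by auto
qed

(* Copies avoiding u, or containing both u and v, survive the cloning; copies through v but
   not u are carried by the transposition of u and v to new copies through u but not v. *)
lemma card_copies_clone:
  assumes "complete_multipartite VH EH" "sgraph V E" "u \<in> V" "v \<in> V" "u \<noteq> v" "{u, v} \<notin> E"
  shows "card (copies VH EH V E) + card {c \<in> copies VH EH V E. fst c \<inter> {u, v} = {v}}
    \<le> card (copies VH EH V (clone E u v)) + card {c \<in> copies VH EH V E. fst c \<inter> {u, v} = {u}}"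
proof -
  let ?X = "copies VH EH V E" and ?Y = "copies VH EH V (clone E u v)"
  define P where "P = {c \<in> ?X. fst c \<inter> {u, v} = {u}}"
  define Q where "Q = {c \<in> ?X. fst c \<inter> {u, v} = {v}}"
  define swap where "swap = (\<lambda>(V', F). (transpose u v ` V', image (transpose u v) ` F))"
  have fin: "finite ?X" "finite ?Y"
    using finite_copies assms(2) sgraph_clone[OF assms(2,3,6)] by blast+
  have kept: "?X - P \<subseteq> ?Y"
    unfolding P_def using copies_clone[OF assms(1,2,6)] by fastforce
  have "swap c \<in> ?Y \<and> u \<in> fst (swap c) \<and> v \<notin> fst (swap c)" if "c \<in> Q" for c
  proof -
    obtain V' F where c: "c = (V', F)"
      by (cases c)
    with that assms(5) have "(V', F) \<in> ?X" "u \<notin> V'" "v \<in> V'"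
      unfolding Q_def by auto
    moreover from this have "u \<in> transpose u v ` V'" "v \<notin> transpose u v ` V'"
      by (force, auto simp: transpose_def)
    ultimately show ?thesis
      using copies_clone_transpose[OF assms(2,3,4)] unfolding c swap_def by simp
  qed
  then have moved: "swap ` Q \<subseteq> ?Y" "(?X - P) \<inter> swap ` Q = {}"
    unfolding P_def by auto
  have "swap (swap c) = c" for c
    unfolding swap_def by (simp add: image_image split: prod.splits)
  then have "inj_on swap Q"
    by (metis inj_on_inverseI)
  then have "card (?X - P) + card Q = card ((?X - P) \<union> swap ` Q)"
    using fin(1) moved(2) by (simp add: card_Un_disjoint card_image Q_def)
  also have "\<dots> \<le> card ?Y"
    using fin(2) kept moved(1) by (simp add: card_mono)
  finally show ?thesis
    using card_Diff_subset[of P ?X] card_mono[of ?X P] fin(1)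
    unfolding P_def Q_def by (simp add: finite_subset)
qed

lemma num_copies_clone_sum:
  assumes "complete_multipartite VH EH" "sgraph V E" "u \<in> V" "v \<in> V" "u \<noteq> v" "{u, v} \<notin> E"
  shows "2 * num_copies VH EH V E
    \<le> num_copies VH EH V (clone E u v) + num_copies VH EH V (clone E v u)"
proof -
  have "{v, u} \<notin> E"
    using assms(6) by (simp add: insert_commute)
  then show ?thesis
    using card_copies_clone[OF assms] card_copies_clone[OF assms(1,2,4,3) assms(5)[symmetric]]
    unfolding num_copies_eq_card insert_commute[of v u] by linarith
qed

subsection \<open>Extremal graphs\<close>

definition admissible :: "nat \<Rightarrow> 'a set \<Rightarrow> 'a set \<Rightarrow> 'a set set \<Rightarrow> bool" where
  "admissible k A V E \<longleftrightarrow> sgraph V E \<and> clique_free k V E \<and> independent_set A V E"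

lemma admissible_maximizer:
  fixes key :: "'a set set \<Rightarrow> 'b :: linorder"
  assumes "finite V" "admissible k A V E"
  obtains F where "admissible k A V F" "\<And>F'. admissible k A V F' \<Longrightarrow> key F' \<le> key F"
proof -
  let ?S = "{F. admissible k A V F}"
  have "?S \<subseteq> Pow (Pow V)"
    unfolding admissible_def sgraph_def by auto
  then have "finite (key ` ?S)"
    using assms(1) by (simp add: finite_subset)
  moreover have "E \<in> ?S"
    using assms(2) by simp
  ultimately have "Max (key ` ?S) \<in> key ` ?S" "\<forall>F'\<in>?S. key F' \<le> Max (key ` ?S)"
    by (blast intro: Max_in, simp)
  then show ?thesis
    using that by auto
qed

lemma admissible_clone:
  assumes "admissible k A V E" "u \<in> V" "v \<in> V" "u \<noteq> v" "{u, v} \<notin> E"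
    and "u \<in> A \<Longrightarrow> \<forall>w\<in>A. {v, w} \<notin> E"
  shows "admissible k A V (clone E u v)"
  using assms(1) sgraph_clone[OF _ assms(2,5)] clique_free_clone[OF _ _ assms(3,4,5)]
    independent_set_clone[OF _ assms(6)]
  unfolding admissible_def by blast

lemma obtain_cloneable_pair:
  assumes "independent_set A V E" "x \<in> V" "y \<in> V" "{x, y} \<notin> E" "\<not> twins E x y"
  obtains u v where "u \<in> V" "v \<in> V" "{u, v} \<notin> E" "\<not> twins E u v"
    "u \<in> A \<Longrightarrow> \<forall>w\<in>A. {v, w} \<notin> E" "v \<in> A \<Longrightarrow> \<forall>w\<in>A. {u, w} \<notin> E"
proof -
  note cloneable = that
  have A: "A \<subseteq> V" "\<And>a b. a \<in> A \<Longrightarrow> b \<in> A \<Longrightarrow> {a, b} \<notin> E"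
    using assms(1) unfolding independent_set_def by auto
  \<comment> \<open>if x is in A but y has a neighbour a' in A, use the pair x, a' inside A instead\<close>
  have from_A: thesis if "a \<in> A" "{a, b} \<notin> E" "a' \<in> A" "{b, a'} \<in> E" for a b a'
  proof (rule cloneable)
    show "\<not> twins E a a'"
    proof
      assume "twins E a a'"
      then have "{a, b} \<in> E \<longleftrightarrow> {a', b} \<in> E"
        unfolding twins_def by blast
      with that(2,4) show False
        by (simp add: insert_commute)
    qed
  qed (use A that(1,3) in auto)
  consider (good) "x \<in> A \<Longrightarrow> \<forall>w\<in>A. {y, w} \<notin> E" "y \<in> A \<Longrightarrow> \<forall>w\<in>A. {x, w} \<notin> E"
    | (x_bad) a' where "x \<in> A" "a' \<in> A" "{y, a'} \<in> E"
    | (y_bad) a' where "y \<in> A" "a' \<in> A" "{x, a'} \<in> E"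
    by blast
  then show ?thesis
  proof cases
    case good
    then show ?thesis
      using cloneable assms(2-5) by blast
  next
    case x_bad
    then show ?thesis
      using from_A[of x y a'] assms(4) by blast
  next
    case y_bad
    moreover have "{y, x} \<notin> E"
      using assms(4) by (simp add: insert_commute)
    ultimately show ?thesis
      using from_A[of y x a'] by blast
  qed
qed

(* Pairs are ordered lexicographically (Product_Lexorder): the number of twin pairs only breaks
   ties between graphs with equally many copies of H. *)
lemma extremal_nonadjacent_twins:
  assumes "complete_multipartite VH EH" "admissible k A V E"
    and extremal: "\<And>F. admissible k A V F \<Longrightarrow>
      (num_copies VH EH V F, card (twin_pairs V F)) \<le> (num_copies VH EH V E, card (twin_pairs V E))"
    and "x \<in> V" "y \<in> V" "{x, y} \<notin> E"
  shows "twins E x y"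
proof (rule ccontr)
  assume "\<not> twins E x y"
  have E: "sgraph V E" "independent_set A V E"
    using assms(2) unfolding admissible_def by auto
  obtain u v where uv: "u \<in> V" "v \<in> V" "{u, v} \<notin> E" "\<not> twins E u v"
    "u \<in> A \<Longrightarrow> \<forall>w\<in>A. {v, w} \<notin> E" "v \<in> A \<Longrightarrow> \<forall>w\<in>A. {u, w} \<notin> E"
    using obtain_cloneable_pair[OF E(2) assms(4-6) \<open>\<not> twins E x y\<close>] by blast
  have "u \<noteq> v"
    using uv(4) twins_refl[OF E(1)] by blast
  have vu: "{v, u} \<notin> E" "\<not> twins E v u"
    using uv(3,4) by (simp_all add: insert_commute twins_commute)
  have adm: "admissible k A V (clone E u v)" "admissible k A V (clone E v u)"
    using admissible_clone[OF assms(2) uv(1,2) \<open>u \<noteq> v\<close> uv(3,5)]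
      admissible_clone[OF assms(2) uv(2,1) \<open>u \<noteq> v\<close>[symmetric] vu(1) uv(6)] by auto
  let ?N = "num_copies VH EH V" and ?T = "\<lambda>F. card (twin_pairs V F)"
  have "?N (clone E u v) \<le> ?N E" "?N (clone E v u) \<le> ?N E"
    using extremal[OF adm(1)] extremal[OF adm(2)] by auto
  moreover have "2 * ?N E \<le> ?N (clone E u v) + ?N (clone E v u)"
    by (rule num_copies_clone_sum[OF assms(1) E(1) uv(1,2) \<open>u \<noteq> v\<close> uv(3)])
  ultimately have "?N (clone E u v) = ?N E" "?N (clone E v u) = ?N E"
    by linarith+
  then have "?T (clone E u v) \<le> ?T E" "?T (clone E v u) \<le> ?T E"
    using extremal[OF adm(1)] extremal[OF adm(2)] by auto
  moreover have "?T E < ?T (clone E u v) \<or> ?T E < ?T (clone E v u)"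
    using card_twin_pairs_clone[OF E(1) uv(1,3,4)] card_twin_pairs_clone[OF E(1) uv(2) vu]
    by linarith
  ultimately show False
    by linarith
qed

lemma card_image_lt_if_clique_free:
  assumes "finite V" "clique_free k V E"
    and "\<And>x y. x \<in> V \<Longrightarrow> y \<in> V \<Longrightarrow> f x \<noteq> f y \<Longrightarrow> {x, y} \<in> E"
  shows "card (f ` V) < k"
proof (rule ccontr)
  assume "\<not> card (f ` V) < k"
  then obtain T where T: "T \<subseteq> f ` V" "card T = k"
    by (meson not_less obtain_subset_with_card_n)
  let ?S = "inv_into V f ` T"
  have "?S \<subseteq> V"
    using T(1) by (auto intro: inv_into_into)
  moreover have "card ?S = k"
    using T card_image inj_on_inv_into by metis
  moreover have "{x, y} \<in> E" if in_S: "x \<in> ?S" "y \<in> ?S" and "x \<noteq> y" for x y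
  proof -
    obtain s t where "s \<in> T" "t \<in> T" "x = inv_into V f s" "y = inv_into V f t"
      using in_S by blast
    moreover from this T(1) have "f x = s" "f y = t"
      by (auto intro: f_inv_into_f)
    ultimately have "f x \<noteq> f y"
      using \<open>x \<noteq> y\<close> by auto
    with in_S \<open>?S \<subseteq> V\<close> show ?thesis
      using assms(3) by blast
  qed
  ultimately show False
    using assms(2) unfolding clique_free_def by blast
qed

lemma complete_multipartite_if_nonadjacency_trans:
  assumes "sgraph V E" "clique_free k V E"
    and trans: "\<And>x y z. x \<in> V \<Longrightarrow> y \<in> V \<Longrightarrow> z \<in> V \<Longrightarrow> {x, y} \<notin> E \<Longrightarrow> {y, z} \<notin> E \<Longrightarrow> {x, z} \<notin> E"
  obtains p :: "'a \<Rightarrow> nat" where "\<forall>v\<in>V. p v < k - 1" "E = cmp_edges V p"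
proof -
  \<comment> \<open>the part of x is its closed non-neighbourhood\<close>
  define f where "f x = {z \<in> V. {x, z} \<notin> E}" for x
  have f_eq: "f x = f y \<longleftrightarrow> {x, y} \<notin> E" if "x \<in> V" "y \<in> V" for x y
  proof
    assume "f x = f y"
    moreover have "y \<in> f y"
      using that(2) assms(1) unfolding f_def by (simp add: sgraph_singleton_notin)
    ultimately show "{x, y} \<notin> E"
      unfolding f_def by blast
  next
    assume "{x, y} \<notin> E"
    then have "{y, x} \<notin> E"
      by (simp add: insert_commute)
    with \<open>{x, y} \<notin> E\<close> show "f x = f y"
      unfolding f_def using trans that by blast
  qed
  have fin: "finite V"
    using assms(1) unfolding sgraph_def by simp
  then have "card (f ` V) < k"
    using card_image_lt_if_clique_free[OF _ assms(2)] f_eq by blast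
  obtain h where h: "bij_betw h (f ` V) {0..<card (f ` V)}"
    using ex_bij_betw_finite_nat fin by blast
  have "h (f v) < k - 1" if "v \<in> V" for v
    using bij_betwE[OF h] that \<open>card (f ` V) < k\<close> by fastforce
  moreover have "h (f x) = h (f y) \<longleftrightarrow> {x, y} \<notin> E" if "x \<in> V" "y \<in> V" for x y
    using bij_betw_imp_inj_on[OF h] that f_eq by (metis image_eqI inj_on_eq_iff)
  then have "E = cmp_edges V (h \<circ> f)"
    using assms(1) by (intro cmp_edgesI) auto
  ultimately show ?thesis
    using that[of "h \<circ> f"] by auto
qed

lemma extremal_admissible_complete_multipartite:
  assumes "complete_multipartite VH EH" "admissible k A V F"
    and extremal: "\<And>F'. admissible k A V F' \<Longrightarrow>
      (num_copies VH EH V F', card (twin_pairs V F')) \<le> (num_copies VH EH V F, card (twin_pairs V F))"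
  obtains p :: "'a \<Rightarrow> nat" where "\<forall>v\<in>V. p v < k - 1" "F = cmp_edges V p"
proof -
  have "{x, z} \<notin> F" if "x \<in> V" "y \<in> V" "z \<in> V" "{x, y} \<notin> F" "{y, z} \<notin> F" for x y z
    using extremal_nonadjacent_twins[OF assms that(1,2,4)] that(5)
    unfolding twins_def by blast
  moreover have "sgraph V F" "clique_free k V F"
    using assms(2) unfolding admissible_def by auto
  ultimately show ?thesis
    using complete_multipartite_if_nonadjacency_trans that by blast
qed

lemma card_independent_set_le_part:
  assumes "finite V" "independent_set A V (cmp_edges V p)" "a \<in> A"
  shows "card A \<le> card {v \<in> V. p v = p a}"
proof (rule card_mono)
  show "A \<subseteq> {v \<in> V. p v = p a}"
    using assms(2,3) unfolding independent_set_def by (auto simp: doubleton_in_cmp_edges_iff)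
qed (use assms(1) in simp)

theorem proposition4p4:
  fixes V :: "'a set" and E :: "'a set set" and A :: "'a set"
    and VH :: "'b set" and EH :: "'b set set" and k n a :: nat
  assumes "k \<ge> 2"
    and "sgraph V E" and "card V = n"
    and "clique_free k V E"
    and "independent_set A V E" and "card A = a"
    and "sgraph VH EH" and "complete_multipartite VH EH"
  shows "\<exists>p :: 'a \<Rightarrow> nat. (\<forall>v\<in>V. p v < k - 1)
           \<and> (\<exists>i < k - 1. a \<le> card {v \<in> V. p v = i})
           \<and> num_copies VH EH V E \<le> num_copies VH EH V (cmp_edges V p)"
proof -
  let ?key = "\<lambda>F. (num_copies VH EH V F, card (twin_pairs V F))"
  have adm: "admissible k A V E" and fin: "finite V"
    using assms(2,4,5) unfolding admissible_def sgraph_def by auto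
  obtain F where F: "admissible k A V F" and extremal: "\<And>F'. admissible k A V F' \<Longrightarrow> ?key F' \<le> ?key F"
    using admissible_maximizer[OF fin adm, of ?key] by blast
  obtain p :: "'a \<Rightarrow> nat" where p: "\<forall>v\<in>V. p v < k - 1" "F = cmp_edges V p"
    using extremal_admissible_complete_multipartite[OF assms(8) F extremal] by blast
  have "\<exists>i < k - 1. a \<le> card {v \<in> V. p v = i}"
  proof (cases "A = {}")
    case True
    with assms(1,6) show ?thesis
      by (intro exI[of _ 0]) auto
  next
    case False
    then obtain a0 where "a0 \<in> A"
      by blast
    moreover have "independent_set A V (cmp_edges V p)"
      using F p(2) unfolding admissible_def by simp
    ultimately show ?thesis
      using card_independent_set_le_part[OF fin] p(1) assms(6) unfolding independent_set_def by blast
  qed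
  moreover have "num_copies VH EH V E \<le> num_copies VH EH V F"
    using extremal[OF adm] by auto
  ultimately show ?thesis
    using p by blast
qed

end
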